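(* Let $b_1,\dots,b_k$ be positive integers and let $[c_1,\dots,c_k]$ be a permutation (rearrangement) of the list $[b_1,\dots,b_k]$. Then $\operatorname{op}_{[b_1,\dots,b_k]}(123)=\operatorname{op}_{[c_1,\dots,c_k]}(123)$.
   Context: An ordered set partition of $[N]$ into $k$ blocks is a sequence $B_1/B_2/\cdots/B_k$ of nonempty, pairwise disjoint subsets of $[N]$ whose union is $[N]$; the order of the blocks matters, but not the order of elements within a block. For a permutation $\rho=\rho_1\cdots\rho_m\in\mathcal{S}_m$, an ordered partition $B_1/\cdots/B_k$ contains $\rho$ if there are block indices $i_1<i_2<\cdots<i_m$ and elements $b_j\in B_{i_j}$ such that $b_1\cdots b_m$ is order-isomorphic to $\rho$ (i.e. $b_a<b_c$ iff $\rho_a<\rho_c$); otherwise it avoids $\rho$. For positive integers $b_1,\dots,b_k$, $\operatorname{op}_{[b_1,\dots,b_k]}(\rho)$ denotes the number of ordered partitions $B_1/\cdots/B_k$ of $[b_1+\cdots+b_k]$ with $|B_i|=b_i$ for all $i$ that avoid $\rho$. *)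

theory Defs
  imports Main "HOL-Combinatorics.List_Permutation"
begin

definition is_ordered_partition :: "nat \<Rightarrow> nat set list \<Rightarrow> bool" where
  "is_ordered_partition N Bs \<longleftrightarrow>
     (\<forall>i < length Bs. Bs ! i \<noteq> {}) \<and>
     (\<forall>i < length Bs. \<forall>j < length Bs. i \<noteq> j \<longrightarrow> Bs ! i \<inter> Bs ! j = {}) \<and>
     \<Union> (set Bs) = {1..N}"

definition order_iso :: "nat list \<Rightarrow> nat list \<Rightarrow> bool" where
  "order_iso xs ys \<longleftrightarrow> length xs = length ys \<and>
     (\<forall>a < length xs. \<forall>c < length xs. (xs ! a < xs ! c \<longleftrightarrow> ys ! a < ys ! c))"

definition op_contains :: "nat set list \<Rightarrow> nat list \<Rightarrow> bool" where
  "op_contains Bs rho \<longleftrightarrow>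
     (\<exists>is bs. length is = length rho \<and> length bs = length rho \<and>
        sorted_wrt (<) is \<and> (\<forall>j < length is. is ! j < length Bs) \<and>
        (\<forall>j < length bs. bs ! j \<in> Bs ! (is ! j)) \<and>
        order_iso bs rho)"

definition op_count :: "nat list \<Rightarrow> nat list \<Rightarrow> nat" where
  "op_count bl rho = card {Bs. is_ordered_partition (sum_list bl) Bs \<and>
       map card Bs = bl \<and> \<not> op_contains Bs rho}"

end

theory Submission
  imports Defs
begin

text \<open>
  Every rearrangement of the block sizes is a product of adjacent transpositions, so it suffices
  to swap the sizes of two adjacent blocks X and Y. Let E and T be the unions of the blocks before
  and after them, and sort the elements u of X \<union> Y into four classes according to whether some
  element of E lies below u and whether some element of T lies above u. Reversing the order inside
  each class is an involution s of X \<union> Y, and replacing X, Y by s(Y), s(X) swaps the two sizes.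
  A 123 pattern either uses at most one of the two blocks, and then only depends on X \<union> Y, or it
  is a pair a < b from the first and second block together with an element of E below a or of T
  above b. Pulling such a pair back along s gives either a pair of the same kind for X, Y or an
  element of X \<union> Y lying above E and below T, which is a pattern by itself. So the involution
  preserves 123-avoidance and is a bijection between the two sets of avoiders.
\<close>

definition reverse_on :: "'a::linorder set \<Rightarrow> 'a \<Rightarrow> 'a" where
  "reverse_on K u =
     (let xs = sorted_list_of_set K in rev xs ! the_inv_into {..<length xs} ((!) xs) u)"

lemma reverse_on_nth_sorted_list_of_set:
  assumes "finite K" "i < card K"
  shows "reverse_on K (sorted_list_of_set K ! i) = sorted_list_of_set K ! (card K - 1 - i)"
proof -
  let ?xs = "sorted_list_of_set K"
  have "inj_on ((!) ?xs) {..<length ?xs}"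
    by (simp add: inj_on_nth)
  then have "the_inv_into {..<length ?xs} ((!) ?xs) (?xs ! i) = i"
    using assms by (simp add: the_inv_into_f_f)
  then show ?thesis
    using assms by (simp add: reverse_on_def rev_nth)
qed

lemma obtain_nth_sorted_list_of_set:
  assumes "finite K" "u \<in> K"
  obtains i where "i < card K" "u = sorted_list_of_set K ! i"
  using assms by (metis in_set_conv_nth length_sorted_list_of_set set_sorted_list_of_set)

lemma reverse_on_mem:
  assumes "finite K" "u \<in> K"
  shows "reverse_on K u \<in> K"
proof -
  obtain i where "i < card K" "u = sorted_list_of_set K ! i"
    using assms by (rule obtain_nth_sorted_list_of_set)
  then show ?thesis
    using assms nth_mem[of "card K - 1 - i" "sorted_list_of_set K"]
    by (simp add: reverse_on_nth_sorted_list_of_set)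
qed

lemma reverse_on_reverse_on:
  assumes "finite K" "u \<in> K"
  shows "reverse_on K (reverse_on K u) = u"
proof -
  obtain i where "i < card K" "u = sorted_list_of_set K ! i"
    using assms by (rule obtain_nth_sorted_list_of_set)
  then show ?thesis
    using assms by (simp add: reverse_on_nth_sorted_list_of_set)
qed

lemma reverse_on_strict_antimono:
  assumes "finite K" "u \<in> K" "v \<in> K" "u < v"
  shows "reverse_on K v < reverse_on K u"
proof -
  let ?xs = "sorted_list_of_set K"
  obtain i j where ij: "i < card K" "u = ?xs ! i" "j < card K" "v = ?xs ! j"
    using assms obtain_nth_sorted_list_of_set by metis
  have sorted: "sorted_wrt (<) ?xs"
    by simp
  have "i < j"
    using ij \<open>u < v\<close> sorted_nth_mono[of ?xs j i] by (metis leI leD length_sorted_list_of_set sorted_sorted_list_of_set)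
  then have "?xs ! (card K - 1 - j) < ?xs ! (card K - 1 - i)"
    using ij by (intro sorted_wrt_nth_less[OF sorted]) auto
  then show ?thesis
    using ij assms by (simp add: reverse_on_nth_sorted_list_of_set)
qed

definition profile :: "'a::order set \<Rightarrow> 'a set \<Rightarrow> 'a \<Rightarrow> bool \<times> bool" where
  "profile E T u = ((\<exists>e\<in>E. e < u), (\<exists>e\<in>T. u < e))"

definition reflect :: "'a::linorder set \<Rightarrow> 'a set \<Rightarrow> 'a set \<Rightarrow> 'a \<Rightarrow> 'a" where
  "reflect E T U u = reverse_on {w \<in> U. profile E T w = profile E T u} u"

lemma
  assumes "finite U" "u \<in> U"
  shows reflect_mem: "reflect E T U u \<in> U"
    and profile_reflect: "profile E T (reflect E T U u) = profile E T u"
  using reverse_on_mem[of "{w \<in> U. profile E T w = profile E T u}" u] assms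
  by (simp_all add: reflect_def)

lemma reflect_reflect:
  assumes "finite U" "u \<in> U"
  shows "reflect E T U (reflect E T U u) = u"
  using assms reverse_on_reverse_on[of "{w \<in> U. profile E T w = profile E T u}" u]
  by (simp add: reflect_def profile_reflect[unfolded reflect_def])

lemma bij_betw_reflect: "finite U \<Longrightarrow> bij_betw (reflect E T U) U U"
  by (rule bij_betw_byWitness[where f' = "reflect E T U"]) (auto simp: reflect_reflect reflect_mem)

lemma image_reflect: "finite U \<Longrightarrow> reflect E T U ` U = U"
  by (rule bij_betw_imp_surj_on[OF bij_betw_reflect])

lemma reflect_image_reflect_image:
  assumes "finite U" "Z \<subseteq> U"
  shows "reflect E T U ` reflect E T U ` Z = Z"
proof -
  have "reflect E T U (reflect E T U z) = z" if "z \<in> Z" for z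
    using that assms by (simp add: reflect_reflect subset_iff)
  then show ?thesis
    unfolding image_image by simp
qed

lemma reflect_less_reflect_iff:
  assumes "finite U" "u \<in> U" "v \<in> U" "profile E T u = profile E T v"
  shows "reflect E T U v < reflect E T U u \<longleftrightarrow> u < v"
proof -
  let ?K = "{w \<in> U. profile E T w = profile E T u}"
  have "reflect E T U u = reverse_on ?K u" "reflect E T U v = reverse_on ?K v"
    using assms(4) by (simp_all add: reflect_def)
  moreover have "finite ?K" "u \<in> ?K" "v \<in> ?K"
    using assms by auto
  ultimately show ?thesis
    using reverse_on_strict_antimono[of ?K u v] reverse_on_strict_antimono[of ?K v u]
    by (cases u v rule: linorder_cases) auto
qed

lemma reflect_crossing:
  fixes E T U :: "'a::linorder set"
  defines "s \<equiv> reflect E T U"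
  assumes "finite U" "x \<in> U" "y \<in> U" "s y < s x"
    and "(\<exists>e\<in>E. e < s y) \<or> (\<exists>e\<in>T. s x < e)"
  shows "(\<exists>u\<in>U. (\<exists>e\<in>E. e < u) \<and> (\<exists>e\<in>T. u < e)) \<or> (x < y \<and> ((\<exists>e\<in>E. e < x) \<or> (\<exists>e\<in>T. y < e)))"
proof (cases "profile E T (s x) = profile E T (s y)")
  case True
  then have same: "profile E T x = profile E T (s y)" "profile E T y = profile E T (s x)"
    using assms by (simp_all add: profile_reflect)
  then have "x < y"
    using assms reflect_less_reflect_iff[of U x y E T] True by (simp add: profile_reflect)
  moreover have "(\<exists>e\<in>E. e < x) \<or> (\<exists>e\<in>T. y < e)"
    using same assms(6) by (auto simp: profile_def)
  ultimately show ?thesis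
    by blast
next
  case False
  have "s x \<in> U" "s y \<in> U"
    using assms by (simp_all add: reflect_mem)
  have "(\<exists>e\<in>E. e < s y) \<Longrightarrow> (\<exists>e\<in>E. e < s x)" "(\<exists>e\<in>T. s x < e) \<Longrightarrow> (\<exists>e\<in>T. s y < e)"
    using \<open>s y < s x\<close> by (meson order.strict_trans)+
  with False assms(6) have "((\<exists>e\<in>E. e < s y) \<and> (\<exists>e\<in>T. s y < e)) \<or> ((\<exists>e\<in>E. e < s x) \<and> (\<exists>e\<in>T. s x < e))"
    unfolding profile_def by auto
  with \<open>s x \<in> U\<close> \<open>s y \<in> U\<close> show ?thesis
    by blast
qed

definition has_increasing_triple :: "'a::order set list \<Rightarrow> bool" where
  "has_increasing_triple Bs \<longleftrightarrow>
     (\<exists>i j k a b c. i < j \<and> j < k \<and> k < length Bs \<and>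
        a \<in> Bs ! i \<and> b \<in> Bs ! j \<and> c \<in> Bs ! k \<and> a < b \<and> b < c)"

lemma length_eq_3_conv: "length xs = 3 \<longleftrightarrow> (\<exists>a b c. xs = [a, b, c])"
  by (auto simp: numeral_3_eq_3 length_Suc_conv)

lemma op_contains_123_iff: "op_contains Bs [1, 2, 3] \<longleftrightarrow> has_increasing_triple Bs"
proof
  assume "op_contains Bs [1, 2, 3]"
  then obtain js bs where len: "length js = 3" "length bs = 3" and "sorted_wrt (<) js"
    and bound: "\<forall>t < 3. js ! t < length Bs" and mem: "\<forall>t < 3. bs ! t \<in> Bs ! (js ! t)"
    and iso: "order_iso bs [1, 2, 3]"
    unfolding op_contains_def by (auto simp: numeral_3_eq_3)
  moreover obtain i j k a b c where "js = [i, j, k]" "bs = [a, b, c]"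
    using len by (metis length_eq_3_conv)
  ultimately have "a < b" "b < c" "a \<in> Bs ! i" "b \<in> Bs ! j" "c \<in> Bs ! k" "k < length Bs" "i < j" "j < k"
    using iso[unfolded order_iso_def, THEN conjunct2, rule_format, of 0 1]
      iso[unfolded order_iso_def, THEN conjunct2, rule_format, of 1 2]
      mem[rule_format, of 0] mem[rule_format, of 1] mem[rule_format, of 2] bound[rule_format, of 2]
    by auto
  then show "has_increasing_triple Bs"
    unfolding has_increasing_triple_def by blast
next
  assume "has_increasing_triple Bs"
  then obtain i j k a b c where "i < j" "j < k" "k < length Bs"
    "a \<in> Bs ! i" "b \<in> Bs ! j" "c \<in> Bs ! k" "a < b" "b < c"
    unfolding has_increasing_triple_def by blast
  then show "op_contains Bs [1, 2, 3]"
    unfolding op_contains_def order_iso_def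
    by (intro exI[of _ "[i, j, k]"] exI[of _ "[a, b, c]"]) (auto simp: less_Suc_eq numeral_3_eq_3)
qed

definition merge_index :: "nat \<Rightarrow> nat \<Rightarrow> nat" where
  "merge_index n i = (if i \<le> n then i else i - 1)"

lemma mono_merge_index: "mono (merge_index n)"
  by (rule monoI) (simp add: merge_index_def, linarith)

lemma merge_index_strict_mono:
  "i < j \<Longrightarrow> \<not> (i = n \<and> j = Suc n) \<Longrightarrow> merge_index n i < merge_index n j"
  by (simp add: merge_index_def, linarith)

lemma nth_merge_index:
  fixes pre suf :: "'a set list" and A B :: "'a set"
  assumes "i < length (pre @ A # B # suf)"
  shows "merge_index (length pre) i < length (pre @ (A \<union> B) # suf) \<and>
    (pre @ A # B # suf) ! i \<subseteq> (pre @ (A \<union> B) # suf) ! merge_index (length pre) i"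
proof -
  consider "i < length pre" | "i = length pre" | "i = Suc (length pre)" | "Suc (length pre) < i"
    by (metis Suc_lessI linorder_neqE_nat)
  then show ?thesis
  proof cases
    case 4
    then obtain m where m: "i = Suc (Suc (length pre) + m)"
      using less_imp_Suc_add by blast
    show ?thesis
      using assms unfolding m by (simp add: merge_index_def nth_append)
  qed (simp_all add: merge_index_def nth_append)
qed

lemma mem_nth_unmerge:
  fixes pre suf :: "'a set list" and A B :: "'a set"
  assumes "j < length (pre @ (A \<union> B) # suf)" "x \<in> (pre @ (A \<union> B) # suf) ! j"
  obtains i where "i < length (pre @ A # B # suf)" "merge_index (length pre) i = j"
    "x \<in> (pre @ A # B # suf) ! i"
proof -
  consider "j < length pre" | "j = length pre" | "length pre < j"
    by (metis linorder_neqE_nat)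
  then show thesis
  proof cases
    case 1
    then show thesis
      using assms that[of j] by (simp add: merge_index_def nth_append)
  next
    case 2
    then have "x \<in> A \<or> x \<in> B"
      using assms by (simp add: nth_append)
    then show thesis
    proof
      assume "x \<in> A"
      then show thesis
        using 2 by (intro that[of j]) (simp_all add: merge_index_def nth_append)
    next
      assume "x \<in> B"
      then show thesis
        using 2 by (intro that[of "Suc j"]) (simp_all add: merge_index_def nth_append)
    qed
  next
    case 3
    then obtain m where m: "j = Suc (length pre + m)"
      using less_imp_Suc_add by blast
    show thesis
      using assms that[of "Suc j"] unfolding m by (simp add: merge_index_def nth_append)
  qed
qed

lemma has_increasing_triple_unmerge:
  assumes "has_increasing_triple (pre @ (A \<union> B) # suf)"
  shows "has_increasing_triple (pre @ A # B # suf)"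
proof -
  let ?L = "pre @ A # B # suf" and ?M = "pre @ (A \<union> B) # suf" and ?g = "merge_index (length pre)"
  obtain j1 j2 j3 a b c where j: "j1 < j2" "j2 < j3" "j3 < length ?M"
    and abc: "a \<in> ?M ! j1" "b \<in> ?M ! j2" "c \<in> ?M ! j3" "a < b" "b < c"
    using assms unfolding has_increasing_triple_def by blast
  have "j1 < length ?M" "j2 < length ?M"
    using j by linarith+
  obtain i1 where "?g i1 = j1" "a \<in> ?L ! i1"
    using mem_nth_unmerge[OF \<open>j1 < length ?M\<close> abc(1)] .
  moreover obtain i2 where "?g i2 = j2" "b \<in> ?L ! i2"
    using mem_nth_unmerge[OF \<open>j2 < length ?M\<close> abc(2)] .
  moreover obtain i3 where "i3 < length ?L" "?g i3 = j3" "c \<in> ?L ! i3"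
    using mem_nth_unmerge[OF j(3) abc(3)] .
  moreover have "i1 < i2" "i2 < i3"
    using calculation j mono_merge_index[THEN monoD, of i2 i1] mono_merge_index[THEN monoD, of i3 i2]
    by (auto simp: not_less[symmetric])
  ultimately show ?thesis
    unfolding has_increasing_triple_def using abc(4,5) by blast
qed

lemma has_increasing_triple_merge:
  assumes "has_increasing_triple (pre @ A # B # suf)"
  shows "has_increasing_triple (pre @ (A \<union> B) # suf) \<or>
    (\<exists>a\<in>A. \<exists>b\<in>B. a < b \<and> ((\<exists>e\<in>\<Union>(set pre). e < a) \<or> (\<exists>e\<in>\<Union>(set suf). b < e)))"
proof -
  let ?L = "pre @ A # B # suf" and ?M = "pre @ (A \<union> B) # suf"
  let ?n = "length pre" and ?g = "merge_index (length pre)"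
  obtain i j k a b c where ijk: "i < j" "j < k" "k < length ?L"
    and abc: "a \<in> ?L ! i" "b \<in> ?L ! j" "c \<in> ?L ! k" "a < b" "b < c"
    using assms unfolding has_increasing_triple_def by blast
  consider "i = ?n" "j = Suc ?n" | "j = ?n" "k = Suc ?n" | "\<not> (i = ?n \<and> j = Suc ?n)" "\<not> (j = ?n \<and> k = Suc ?n)"
    by blast
  then show ?thesis
  proof cases
    case 1
    then obtain m where "k = Suc (Suc ?n + m)"
      using ijk(2) less_imp_Suc_add by blast
    then have "c \<in> \<Union>(set suf)"
      using ijk(3) abc(3) by (auto simp: nth_append)
    then show ?thesis
      using 1 abc by (auto simp: nth_append)
  next
    case 2
    then have "a \<in> \<Union>(set pre)"
      using ijk abc by (auto simp: nth_append)
    then show ?thesis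
      using 2 abc by (auto simp: nth_append)
  next
    case 3
    then have "?g i < ?g j" "?g j < ?g k"
      using ijk by (simp_all add: merge_index_strict_mono)
    moreover have "i < length ?L" "j < length ?L"
      using ijk by linarith+
    then have "a \<in> ?M ! ?g i" "b \<in> ?M ! ?g j" "?g k < length ?M" "c \<in> ?M ! ?g k"
      using nth_merge_index[of i pre A B suf] nth_merge_index[of j pre A B suf]
        nth_merge_index[OF ijk(3)] abc(1-3) by auto
    ultimately have "has_increasing_triple ?M"
      unfolding has_increasing_triple_def using abc(4,5) by blast
    then show ?thesis ..
  qed
qed

lemma has_increasing_triple_middle:
  assumes "u \<in> M" "e \<in> \<Union>(set pre)" "e < u" "e' \<in> \<Union>(set suf)" "u < e'"
  shows "has_increasing_triple (pre @ M # suf)"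
proof -
  obtain i k where "i < length pre" "e \<in> pre ! i" "k < length suf" "e' \<in> suf ! k"
    using assms by (auto simp: in_set_conv_nth)
  then show ?thesis
    unfolding has_increasing_triple_def using assms
    by (intro exI[of _ i] exI[of _ "length pre"] exI[of _ "Suc (length pre + k)"] exI[of _ e] exI[of _ u] exI[of _ e'])
      (simp add: nth_append)
qed

lemma has_increasing_triple_crossing:
  assumes "a \<in> A" "b \<in> B" "a < b" "(\<exists>e\<in>\<Union>(set pre). e < a) \<or> (\<exists>e\<in>\<Union>(set suf). b < e)"
  shows "has_increasing_triple (pre @ A # B # suf)"
  using assms(4)
proof
  assume "\<exists>e\<in>\<Union>(set pre). e < a"
  then obtain i e where "i < length pre" "e \<in> pre ! i" "e < a"
    by (auto simp: in_set_conv_nth)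
  then show ?thesis
    unfolding has_increasing_triple_def using assms
    by (intro exI[of _ i] exI[of _ "length pre"] exI[of _ "Suc (length pre)"] exI[of _ e] exI[of _ a] exI[of _ b])
      (simp add: nth_append)
next
  assume "\<exists>e\<in>\<Union>(set suf). b < e"
  then obtain k e where "k < length suf" "e \<in> suf ! k" "b < e"
    by (auto simp: in_set_conv_nth)
  then show ?thesis
    unfolding has_increasing_triple_def using assms
    by (intro exI[of _ "length pre"] exI[of _ "Suc (length pre)"] exI[of _ "Suc (Suc (length pre + k))"]
        exI[of _ a] exI[of _ b] exI[of _ e])
      (simp add: nth_append)
qed

lemma pairwise_disjoint_nth_iff_sorted_wrt_disjnt:
  "(\<forall>i < length Bs. \<forall>j < length Bs. i \<noteq> j \<longrightarrow> Bs ! i \<inter> Bs ! j = {}) \<longleftrightarrow> sorted_wrt disjnt Bs"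
  unfolding sorted_wrt_iff_nth_less disjnt_def
proof (intro iffI allI impI)
  fix i j
  assume "\<forall>i j. i < j \<longrightarrow> j < length Bs \<longrightarrow> Bs ! i \<inter> Bs ! j = {}"
    and "i < length Bs" "j < length Bs" "i \<noteq> j"
  then show "Bs ! i \<inter> Bs ! j = {}"
    by (cases i j rule: linorder_cases) (auto simp: Int_commute)
qed auto

lemma is_ordered_partition_iff:
  "is_ordered_partition N Bs \<longleftrightarrow> {} \<notin> set Bs \<and> sorted_wrt disjnt Bs \<and> \<Union>(set Bs) = {1..N}"
  unfolding is_ordered_partition_def pairwise_disjoint_nth_iff_sorted_wrt_disjnt
  by (auto simp: in_set_conv_nth)

lemma is_ordered_partition_replace_adjacent:
  assumes "is_ordered_partition N (pre @ X # Y # suf)"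
    and "A \<union> B = X \<union> Y" "disjnt A B" "A \<noteq> {}" "B \<noteq> {}"
  shows "is_ordered_partition N (pre @ A # B # suf)"
proof -
  have "\<Union>(set (pre @ A # B # suf)) = \<Union>(set (pre @ X # Y # suf))"
    using assms(2) by auto
  moreover have "disjnt C A \<and> disjnt C B" if "disjnt C X" "disjnt C Y" for C
    using that assms(2) unfolding disjnt_def by blast
  moreover have "disjnt A C \<and> disjnt B C" if "disjnt X C" "disjnt Y C" for C
    using that assms(2) unfolding disjnt_def by blast
  ultimately show ?thesis
    using assms(1,3-5) unfolding is_ordered_partition_iff
    by (simp add: sorted_wrt_append)
qed

definition swap_blocks :: "nat \<Rightarrow> 'a::linorder set list \<Rightarrow> 'a set list" where
  "swap_blocks n Bs =
     (let pre = take n Bs; X = Bs ! n; Y = Bs ! Suc n; suf = drop (Suc (Suc n)) Bs;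
          s = reflect (\<Union>(set pre)) (\<Union>(set suf)) (X \<union> Y)
      in pre @ s ` Y # s ` X # suf)"

lemma swap_blocks_append:
  "swap_blocks (length pre) (pre @ X # Y # suf) =
     (let s = reflect (\<Union>(set pre)) (\<Union>(set suf)) (X \<union> Y) in pre @ s ` Y # s ` X # suf)"
  by (simp add: swap_blocks_def nth_append)

lemma swap_blocks_swap_blocks:
  assumes "finite (X \<union> Y)"
  shows "swap_blocks (length pre) (swap_blocks (length pre) (pre @ X # Y # suf)) = pre @ X # Y # suf"
proof -
  define s where "s = reflect (\<Union>(set pre)) (\<Union>(set suf)) (X \<union> Y)"
  have "s ` Y \<union> s ` X = X \<union> Y"
    using image_reflect[OF assms] unfolding s_def by (metis image_Un sup_commute)
  moreover have "s ` s ` Z = Z" if "Z \<subseteq> X \<union> Y" for Z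
    using reflect_image_reflect_image[OF assms that] unfolding s_def .
  ultimately show ?thesis
    by (simp add: swap_blocks_append Let_def s_def[symmetric])
qed

lemma has_increasing_triple_swap_blocks:
  assumes "finite (X \<union> Y)"
    and "has_increasing_triple (swap_blocks (length pre) (pre @ X # Y # suf))"
  shows "has_increasing_triple (pre @ X # Y # suf)"
proof -
  define E T where "E = \<Union>(set pre)" and "T = \<Union>(set suf)"
  define s where "s = reflect E T (X \<union> Y)"
  have image: "s ` Y \<union> s ` X = X \<union> Y"
    using image_reflect[OF assms(1)] unfolding s_def by (metis image_Un sup_commute)
  have "has_increasing_triple (pre @ s ` Y # s ` X # suf)"
    using assms(2) by (simp add: swap_blocks_append Let_def s_def E_def T_def)
  then have "has_increasing_triple (pre @ (X \<union> Y) # suf) \<or>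
      (\<exists>a\<in>s ` Y. \<exists>b\<in>s ` X. a < b \<and> ((\<exists>e\<in>E. e < a) \<or> (\<exists>e\<in>T. b < e)))"
    unfolding E_def T_def by (rule has_increasing_triple_merge[of pre "s ` Y" "s ` X" suf, unfolded image])
  then show ?thesis
  proof
    assume "has_increasing_triple (pre @ (X \<union> Y) # suf)"
    then show ?thesis
      by (rule has_increasing_triple_unmerge)
  next
    assume "\<exists>a\<in>s ` Y. \<exists>b\<in>s ` X. a < b \<and> ((\<exists>e\<in>E. e < a) \<or> (\<exists>e\<in>T. b < e))"
    then obtain y x where xy: "y \<in> Y" "x \<in> X" "s y < s x" "(\<exists>e\<in>E. e < s y) \<or> (\<exists>e\<in>T. s x < e)"
      by blast
    then have "x \<in> X \<union> Y" "y \<in> X \<union> Y"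
      by simp_all
    from reflect_crossing[OF assms(1) this xy(3)[unfolded s_def] xy(4)[unfolded s_def]]
    show ?thesis
    proof
      assume "\<exists>u\<in>X \<union> Y. (\<exists>e\<in>E. e < u) \<and> (\<exists>e\<in>T. u < e)"
      then obtain u e e' where "u \<in> X \<union> Y" "e \<in> E" "e < u" "e' \<in> T" "u < e'"
        by blast
      then have "has_increasing_triple (pre @ (X \<union> Y) # suf)"
        unfolding E_def T_def by (rule has_increasing_triple_middle)
      then show ?thesis
        by (rule has_increasing_triple_unmerge)
    next
      assume "x < y \<and> ((\<exists>e\<in>E. e < x) \<or> (\<exists>e\<in>T. y < e))"
      then show ?thesis
        using has_increasing_triple_crossing[OF xy(2,1), of pre suf] unfolding E_def T_def by blast
    qed
  qed
qed

lemma finite_mem_ordered_partition: "is_ordered_partition N Bs \<Longrightarrow> B \<in> set Bs \<Longrightarrow> finite B"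
  unfolding is_ordered_partition_iff by (metis Union_upper finite_atLeastAtMost finite_subset)

lemma swap_blocks_ordered_partition:
  assumes part: "is_ordered_partition N (pre @ X # Y # suf)"
  shows "is_ordered_partition N (swap_blocks (length pre) (pre @ X # Y # suf))"
    and "map card (swap_blocks (length pre) (pre @ X # Y # suf)) = map card (pre @ Y # X # suf)"
proof -
  have fin: "finite (X \<union> Y)"
    using finite_mem_ordered_partition[OF part] by simp
  from part have "disjnt X Y" "X \<noteq> {}" "Y \<noteq> {}"
    unfolding is_ordered_partition_iff by (auto simp: sorted_wrt_append)
  define s where "s = reflect (\<Union>(set pre)) (\<Union>(set suf)) (X \<union> Y)"
  have swapped: "swap_blocks (length pre) (pre @ X # Y # suf) = pre @ s ` Y # s ` X # suf"
    by (simp add: swap_blocks_append Let_def s_def)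
  have inj: "inj_on s (X \<union> Y)"
    unfolding s_def by (rule bij_betw_imp_inj_on[OF bij_betw_reflect[OF fin]])
  have "s ` Y \<union> s ` X = X \<union> Y"
    using image_reflect[OF fin] unfolding s_def by (metis image_Un sup_commute)
  moreover have "disjnt (s ` Y) (s ` X)"
    using disjnt_inj_on_iff[of s "{X, Y}" Y X] inj \<open>disjnt X Y\<close> by (simp add: disjnt_sym)
  moreover have "s ` Y \<noteq> {}" "s ` X \<noteq> {}"
    using \<open>X \<noteq> {}\<close> \<open>Y \<noteq> {}\<close> by simp_all
  ultimately show "is_ordered_partition N (swap_blocks (length pre) (pre @ X # Y # suf))"
    unfolding swapped using is_ordered_partition_replace_adjacent[OF part] by blast
  show "map card (swap_blocks (length pre) (pre @ X # Y # suf)) = map card (pre @ Y # X # suf)"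
    unfolding swapped using inj by (simp add: card_image inj_on_subset)
qed

definition op_avoiders :: "nat list \<Rightarrow> nat list \<Rightarrow> nat set list set" where
  "op_avoiders bl rho =
     {Bs. is_ordered_partition (sum_list bl) Bs \<and> map card Bs = bl \<and> \<not> op_contains Bs rho}"

lemma swap_blocks_op_avoiders:
  assumes "Bs \<in> op_avoiders (pb @ p # q # sb) [1, 2, 3]"
  shows "swap_blocks (length pb) Bs \<in> op_avoiders (pb @ q # p # sb) [1, 2, 3]"
    and "swap_blocks (length pb) (swap_blocks (length pb) Bs) = Bs"
proof -
  have part: "is_ordered_partition (sum_list (pb @ p # q # sb)) Bs"
    and cards: "map card Bs = pb @ p # q # sb" and avoid: "\<not> has_increasing_triple Bs"
    using assms unfolding op_avoiders_def op_contains_123_iff by simp_all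
  from cards obtain pre X Y suf where Bs: "Bs = pre @ X # Y # suf"
    and "map card pre = pb" "card X = p" "card Y = q" "map card suf = sb"
    by (auto simp: map_eq_append_conv map_eq_Cons_conv)
  then have n: "length pb = length pre"
    by auto
  have fin: "finite (X \<union> Y)"
    using finite_mem_ordered_partition[OF part] Bs by simp
  have "is_ordered_partition (sum_list (pb @ q # p # sb)) (swap_blocks (length pb) Bs)"
    using swap_blocks_ordered_partition(1)[OF part[unfolded Bs]] unfolding Bs n by (simp add: ac_simps)
  moreover have "map card (swap_blocks (length pb) Bs) = pb @ q # p # sb"
    using swap_blocks_ordered_partition(2)[OF part[unfolded Bs]] unfolding Bs n
    by (simp add: \<open>map card pre = pb\<close> \<open>card X = p\<close> \<open>card Y = q\<close> \<open>map card suf = sb\<close>)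
  moreover have "\<not> has_increasing_triple (swap_blocks (length pb) Bs)"
    using avoid has_increasing_triple_swap_blocks[OF fin] unfolding Bs n by blast
  ultimately show "swap_blocks (length pb) Bs \<in> op_avoiders (pb @ q # p # sb) [1, 2, 3]"
    unfolding op_avoiders_def op_contains_123_iff by blast
  show "swap_blocks (length pb) (swap_blocks (length pb) Bs) = Bs"
    unfolding Bs n by (rule swap_blocks_swap_blocks[OF fin])
qed

lemma op_count_123_swap_adjacent:
  "op_count (pb @ p # q # sb) [1, 2, 3] = op_count (pb @ q # p # sb) [1, 2, 3]"
proof -
  have "bij_betw (swap_blocks (length pb)) (op_avoiders (pb @ p # q # sb) [1, 2, 3])
      (op_avoiders (pb @ q # p # sb) [1, 2, 3])"
    using swap_blocks_op_avoiders[of _ pb p q sb] swap_blocks_op_avoiders[of _ pb q p sb]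
    by (intro bij_betw_byWitness[where f' = "swap_blocks (length pb)"]) blast+
  then show ?thesis
    unfolding op_count_def op_avoiders_def[symmetric] by (rule bij_betw_same_card)
qed

lemma adjacent_swap_invariant_mset_eq:
  fixes f :: "'a list \<Rightarrow> 'b"
  assumes swap: "\<And>pre a b suf. f (pre @ a # b # suf) = f (pre @ b # a # suf)"
    and "mset xs = mset ys"
  shows "f xs = f ys"
proof -
  have move_front: "f (pre @ zs @ x # suf) = f (pre @ x # zs @ suf)" for pre zs x suf
  proof (induction zs arbitrary: pre)
    case Nil
    then show ?case by simp
  next
    case (Cons z zs)
    have "f (pre @ (z # zs) @ x # suf) = f ((pre @ [z]) @ zs @ x # suf)"
      by simp
    also have "\<dots> = f ((pre @ [z]) @ x # zs @ suf)"
      by (rule Cons.IH)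
    also have "\<dots> = f (pre @ x # z # zs @ suf)"
      using swap by simp
    finally show ?case
      by simp
  qed
  have "f (pre @ xs) = f (pre @ ys)" if "mset xs = mset ys" for pre
    using that
  proof (induction xs arbitrary: pre ys)
    case Nil
    then show ?case by simp
  next
    case (Cons x xs)
    then obtain zs suf where ys: "ys = zs @ x # suf"
      by (metis list.set_intros(1) set_mset_mset split_list)
    with Cons.prems have "mset xs = mset (zs @ suf)"
      by simp
    then have "f ((pre @ [x]) @ xs) = f ((pre @ [x]) @ zs @ suf)"
      by (rule Cons.IH)
    then show ?case
      unfolding ys using move_front by simp
  qed
  from this[of "[]"] show ?thesis
    using assms(2) by simp
qed

theorem lemma1:
  fixes bl cl :: "nat list"
  assumes "\<forall>b \<in> set bl. b > 0"
    and "mset cl = mset bl"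
  shows "op_count bl [1, 2, 3] = op_count cl [1, 2, 3]"
  using adjacent_swap_invariant_mset_eq[where f = "\<lambda>l. op_count l [1, 2, 3]",
      OF op_count_123_swap_adjacent assms(2)[symmetric]] .

end
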